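(* For every component $c_i$, the value of information assessed by the heuristic satisfies $0\le \mathrm{VoI}_H(i)\le \mathrm{VoI}_L(i)$.
   Context: A system consists of $N$ binary components with random joint state $s\in\{0,1\}^N$ ($s_k=1$: working) with arbitrary prior distribution, system state $u=\phi(s)$ for a structure function $\phi:\{0,1\}^N\to\{0,1\}$. Inspecting $c_i$ yields a binary observation $y_i$ jointly distributed with $s$. Local metric: an action is $A=(a_1,\dots,a_N)\in\{0,1\}^N$ ($a_k=1$: replace $c_k$); replacement is perfect (post-action state $s'_k=1$ if $a_k=1$, $s'_k=s_k$ otherwise). The loss is $\mathcal{L}(s',A)=C_F(1-\phi(s'))+\sum_k a_kC_{R,k}$. The prior loss is $L_\pi=\min_A\mathbb{E}[\mathcal{L}(s',A)]$, attained by a prior optimal action $A_\pi=(a_{\pi,1},\dots,a_{\pi,N})$. The local expected posterior loss is $L^L_\omega(i)=\sum_{c\in\{0,1\}}\mathbb{P}[y_i=c]\min_A\mathbb{E}[\mathcal{L}(s',A)\mid y_i=c]$ and $\mathrm{VoI}_L(i)=L_\pi-L^L_\omega(i)$ (terms with zero probability omitted). Heuristic: after observing $y_i=c$, the posterior action $A_\omega(c)$ is chosen as follows. If $c\ne a_{\pi,i}$, then $A_\omega(c)=A_\pi$. If $c=a_{\pi,i}$, then $A_\omega(c)$ is whichever of $A_\pi$ and $A_\pi^{(i)}$ (the vector $A_\pi$ with its $i$-th entry flipped, all other entries unchanged) has lower conditional expected loss $\mathbb{E}[\mathcal{L}(s',A)\mid y_i=c]$. The heuristic value of information is $\mathrm{VoI}_H(i)=L_\pi-\sum_{c}\mathbb{P}[y_i=c]\,\mathbb{E}[\mathcal{L}(s',A_\omega(c))\mid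 y_i=c]$. *)

theory Defs
  imports "HOL-Probability.Probability_Mass_Function"
begin

text \<open>Components are indexed by a finite type 'n (so N = CARD('n)).
  A joint state is s :: 'n \<Rightarrow> bool (True = working).  The joint distribution of the
  component states and of all observations is a pmf M on pairs (s, y), with
  y :: 'n \<Rightarrow> bool the vector of (binary) observations; y i is the result of
  inspecting component i.  An action is A :: 'n \<Rightarrow> bool (True = replace).\<close>

definition post_state :: "('n \<Rightarrow> bool) \<Rightarrow> ('n \<Rightarrow> bool) \<Rightarrow> ('n \<Rightarrow> bool)" where
  "post_state s A = (\<lambda>k. if A k then True else s k)"

definition loss :: "(('n::finite \<Rightarrow> bool) \<Rightarrow> bool) \<Rightarrow> real \<Rightarrow> ('n \<Rightarrow> real)
    \<Rightarrow> ('n \<Rightarrow> bool) \<Rightarrow> ('n \<Rightarrow> bool) \<Rightarrow> real" where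
  "loss phi CF CR s' A = CF * (1 - (if phi s' then 1 else 0)) + (\<Sum>k\<in>UNIV. (if A k then 1 else 0) * CR k)"

definition exp_loss :: "((('n::finite \<Rightarrow> bool) \<times> ('n \<Rightarrow> bool)) pmf) \<Rightarrow> (('n \<Rightarrow> bool) \<Rightarrow> bool)
    \<Rightarrow> real \<Rightarrow> ('n \<Rightarrow> real) \<Rightarrow> ('n \<Rightarrow> bool) \<Rightarrow> real" where
  "exp_loss D phi CF CR A =
     measure_pmf.expectation D (\<lambda>sy. loss phi CF CR (post_state (fst sy) A) A)"

definition prior_loss :: "((('n::finite \<Rightarrow> bool) \<times> ('n \<Rightarrow> bool)) pmf) \<Rightarrow> (('n \<Rightarrow> bool) \<Rightarrow> bool)
    \<Rightarrow> real \<Rightarrow> ('n \<Rightarrow> real) \<Rightarrow> real" where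
  "prior_loss M phi CF CR = Min (range (exp_loss M phi CF CR))"

definition obs_event :: "'n \<Rightarrow> bool \<Rightarrow> (('n \<Rightarrow> bool) \<times> ('n \<Rightarrow> bool)) set" where
  "obs_event i c = {sy. snd sy i = c}"

definition obs_prob :: "((('n \<Rightarrow> bool) \<times> ('n \<Rightarrow> bool)) pmf) \<Rightarrow> 'n \<Rightarrow> bool \<Rightarrow> real" where
  "obs_prob M i c = measure_pmf.prob M (obs_event i c)"

text \<open>Conditional expected loss E[L(s',A) | y_i = c] (meaningful when obs_prob M i c > 0).\<close>
definition cond_exp_loss :: "((('n::finite \<Rightarrow> bool) \<times> ('n \<Rightarrow> bool)) pmf) \<Rightarrow> (('n \<Rightarrow> bool) \<Rightarrow> bool)
    \<Rightarrow> real \<Rightarrow> ('n \<Rightarrow> real) \<Rightarrow> 'n \<Rightarrow> bool \<Rightarrow> ('n \<Rightarrow> bool) \<Rightarrow> real" where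
  "cond_exp_loss M phi CF CR i c A = exp_loss (cond_pmf M (obs_event i c)) phi CF CR A"

definition local_post_loss :: "((('n::finite \<Rightarrow> bool) \<times> ('n \<Rightarrow> bool)) pmf) \<Rightarrow> (('n \<Rightarrow> bool) \<Rightarrow> bool)
    \<Rightarrow> real \<Rightarrow> ('n \<Rightarrow> real) \<Rightarrow> 'n \<Rightarrow> real" where
  "local_post_loss M phi CF CR i =
     (\<Sum>c\<in>{c. obs_prob M i c \<noteq> 0}. obs_prob M i c * Min (range (cond_exp_loss M phi CF CR i c)))"

definition VoI_L :: "((('n::finite \<Rightarrow> bool) \<times> ('n \<Rightarrow> bool)) pmf) \<Rightarrow> (('n \<Rightarrow> bool) \<Rightarrow> bool)
    \<Rightarrow> real \<Rightarrow> ('n \<Rightarrow> real) \<Rightarrow> 'n \<Rightarrow> real" where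
  "VoI_L M phi CF CR i = prior_loss M phi CF CR - local_post_loss M phi CF CR i"

text \<open>Heuristic posterior action, given a prior optimal action Api (ties resolved towards Api;
  this does not affect the value of VoI_H).\<close>
definition heur_action :: "((('n::finite \<Rightarrow> bool) \<times> ('n \<Rightarrow> bool)) pmf) \<Rightarrow> (('n \<Rightarrow> bool) \<Rightarrow> bool)
    \<Rightarrow> real \<Rightarrow> ('n \<Rightarrow> real) \<Rightarrow> ('n \<Rightarrow> bool) \<Rightarrow> 'n \<Rightarrow> bool \<Rightarrow> ('n \<Rightarrow> bool)" where
  "heur_action M phi CF CR Api i c =
     (if c \<noteq> Api i then Api
      else if cond_exp_loss M phi CF CR i c Api \<le> cond_exp_loss M phi CF CR i c (Api(i := \<not> Api i))
           then Api else Api(i := \<not> Api i))"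

definition VoI_H :: "((('n::finite \<Rightarrow> bool) \<times> ('n \<Rightarrow> bool)) pmf) \<Rightarrow> (('n \<Rightarrow> bool) \<Rightarrow> bool)
    \<Rightarrow> real \<Rightarrow> ('n \<Rightarrow> real) \<Rightarrow> ('n \<Rightarrow> bool) \<Rightarrow> 'n \<Rightarrow> real" where
  "VoI_H M phi CF CR Api i = prior_loss M phi CF CR -
     (\<Sum>c\<in>{c. obs_prob M i c \<noteq> 0}. obs_prob M i c *
        cond_exp_loss M phi CF CR i c (heur_action M phi CF CR Api i c))"

end

theory Submission imports Defs begin

text \<open>In every observation branch the heuristic action is never worse than the prior optimal
  action, and by the law of total expectation the branch losses of the prior optimal action
  average to the prior loss; hence the heuristic value of information is nonnegative.  On the
  other hand the heuristic action is one of the candidates over which each branch loss of the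
  local metric is minimised, so its expected posterior loss dominates the local one.\<close>

lemma prob_times_expectation_cond_pmf:
  fixes M :: "'a::finite pmf" and f :: "'a \<Rightarrow> real"
  assumes "measure_pmf.prob M E \<noteq> 0"
  shows "measure_pmf.prob M E * measure_pmf.expectation (cond_pmf M E) f
           = (\<Sum>a\<in>E. f a * pmf M a)"
proof -
  have ne: "set_pmf M \<inter> E \<noteq> {}"
    using assms measure_pmf_zero_iff[of M E] by simp
  have "measure_pmf.expectation (cond_pmf M E) f = (\<Sum>a\<in>UNIV. f a * pmf (cond_pmf M E) a)"
    by (rule integral_measure_pmf_real) auto
  also have "\<dots> = (\<Sum>a\<in>UNIV. if a \<in> E then f a * pmf M a / measure_pmf.prob M E else 0)"
    by (rule sum.cong) (auto simp: pmf_cond[OF ne])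
  also have "\<dots> = (\<Sum>a\<in>E. f a * pmf M a) / measure_pmf.prob M E"
    by (simp add: sum.If_cases sum_divide_distrib)
  finally show ?thesis
    using assms by simp
qed

lemma sum_pmf_eq_0_if_prob_eq_0:
  fixes M :: "'a pmf" and f :: "'a \<Rightarrow> real"
  assumes "measure_pmf.prob M E = 0"
  shows "(\<Sum>a\<in>E. f a * pmf M a) = 0"
proof -
  have "set_pmf M \<inter> E = {}"
    using assms measure_pmf_zero_iff[of M E] by simp
  then show ?thesis
    by (intro sum.neutral) (auto simp: set_pmf_iff)
qed

lemma expectation_eq_sum_prob_times_expectation_cond_pmf:
  fixes M :: "'a::finite pmf" and f :: "'a \<Rightarrow> real" and g :: "'a \<Rightarrow> 'b::finite"
  shows "measure_pmf.expectation M f =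
    (\<Sum>c\<in>{c. measure_pmf.prob M {x. g x = c} \<noteq> 0}.
        measure_pmf.prob M {x. g x = c} * measure_pmf.expectation (cond_pmf M {x. g x = c}) f)"
proof -
  have "measure_pmf.expectation M f = (\<Sum>a\<in>UNIV. f a * pmf M a)"
    by (rule integral_measure_pmf_real) auto
  also have "\<dots> = (\<Sum>c\<in>UNIV. \<Sum>a\<in>{x. g x = c}. f a * pmf M a)"
    using sum.group[of UNIV UNIV g "\<lambda>a. f a * pmf M a"] by simp
  also have "\<dots> = (\<Sum>c\<in>{c. measure_pmf.prob M {x. g x = c} \<noteq> 0}. \<Sum>a\<in>{x. g x = c}. f a * pmf M a)"
    by (rule sum.mono_neutral_right) (auto intro: sum_pmf_eq_0_if_prob_eq_0)
  also have "\<dots> = (\<Sum>c\<in>{c. measure_pmf.prob M {x. g x = c} \<noteq> 0}.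
        measure_pmf.prob M {x. g x = c} * measure_pmf.expectation (cond_pmf M {x. g x = c}) f)"
    by (rule sum.cong) (simp_all add: prob_times_expectation_cond_pmf)
  finally show ?thesis .
qed

lemma exp_loss_eq_sum_obs_prob_times_cond_exp_loss:
  "exp_loss M phi CF CR A =
     (\<Sum>c\<in>{c. obs_prob M i c \<noteq> 0}. obs_prob M i c * cond_exp_loss M phi CF CR i c A)"
  unfolding exp_loss_def cond_exp_loss_def obs_prob_def obs_event_def
  by (rule expectation_eq_sum_prob_times_expectation_cond_pmf)

lemma cond_exp_loss_heur_action_le:
  "cond_exp_loss M phi CF CR i c (heur_action M phi CF CR Api i c)
     \<le> cond_exp_loss M phi CF CR i c Api"
  unfolding heur_action_def by auto

theorem mainTheorem6:
  fixes M :: "(('n::finite \<Rightarrow> bool) \<times> ('n \<Rightarrow> bool)) pmf"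
    and phi :: "('n \<Rightarrow> bool) \<Rightarrow> bool"
    and CF :: real and CR :: "'n \<Rightarrow> real"
    and Api :: "'n \<Rightarrow> bool" and i :: 'n
  assumes "exp_loss M phi CF CR Api = prior_loss M phi CF CR"
  shows "0 \<le> VoI_H M phi CF CR Api i \<and> VoI_H M phi CF CR Api i \<le> VoI_L M phi CF CR i"
proof -
  let ?S = "{c. obs_prob M i c \<noteq> 0}"
  let ?L = "cond_exp_loss M phi CF CR i"
  have prob_nonneg: "0 \<le> obs_prob M i c" for c
    unfolding obs_prob_def by simp
  have "(\<Sum>c\<in>?S. obs_prob M i c * ?L c (heur_action M phi CF CR Api i c))
          \<le> (\<Sum>c\<in>?S. obs_prob M i c * ?L c Api)"
    by (intro sum_mono mult_left_mono cond_exp_loss_heur_action_le prob_nonneg)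
  then have "0 \<le> VoI_H M phi CF CR Api i"
    using assms exp_loss_eq_sum_obs_prob_times_cond_exp_loss[of M phi CF CR Api i]
    by (simp add: VoI_H_def)
  moreover have "(\<Sum>c\<in>?S. obs_prob M i c * Min (range (?L c)))
          \<le> (\<Sum>c\<in>?S. obs_prob M i c * ?L c (heur_action M phi CF CR Api i c))"
    by (intro sum_mono mult_left_mono Min_le prob_nonneg) auto
  then have "VoI_H M phi CF CR Api i \<le> VoI_L M phi CF CR i"
    by (simp add: VoI_H_def VoI_L_def local_post_loss_def)
  ultimately show ?thesis ..
qed

end
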